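(* Let $X$ be a finite set of even cardinality, $s:\mathfrak S_X\otimes_{\min}\mathfrak S_X\to\mathbb C$ a state, and $\tilde s=s\circ(q_C\otimes q_C)$, regarded as a state of $\mathcal S_{X,\mathbb Z_2}\otimes_{\rm c}\mathcal S_{X,\mathbb Z_2}$. Suppose the correlation $p_{\tilde s}(a,b|x,y)=\tilde s(e_{x,a}\otimes f_{y,b})$ is synchronous, i.e. $p_{\tilde s}(a,b|x,x)=0$ whenever $a\ne b$. Then $\tilde s$ is an abstract self-test for $\mathcal S_C$: there is exactly one state in $\mathcal S_C$ whose restriction to $\mathcal S_{X,\mathbb Z_2}\otimes\mathcal S_{X,\mathbb Z_2}$ equals $\tilde s$.
   Context: $\mathcal A_{X,\mathbb Z_2}$ is the universal unital C*-algebra generated by projections $e_{x,a}$ ($x\in X$, $a\in\mathbb Z_2$) with $e_{x,0}+e_{x,1}=1$; $\mathcal S_{X,\mathbb Z_2}=\mathrm{span}\{e_{x,a}\}$; in the second tensor factor the generators are written $f_{y,b}$. The Clifford algebra $\mathfrak C_X$ is the universal unital C*-algebra generated by self-adjoint unitaries $u_x$, $x\in X$, with $u_xu_y+u_yu_x=0$ for $x\ne y$. $q_C:\mathcal A_{X,\mathbb Z_2}\to\mathfrak C_X$ is the surjective *-homomorphism with $q_C(e_{x,0})=(1+u_x)/2$, $q_C(e_{x,1})=(1-u_x)/2$ (its kernel is the ideal generated by $e_{x,0}e_{y,0}+e_{y,0}e_{x,0}-e_{x,0}-e_{y,0}+\frac12$, $x\ne y$). $\mathfrak S_X=q_C(\mathcal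 S_{X,\mathbb Z_2})=\mathrm{span}\{1,u_x:x\in X\}\subseteq\mathfrak C_X$. $\mathcal S_C$ is the set of states of $\mathcal A_{X,\mathbb Z_2}\otimes_{\min}\mathcal A_{X,\mathbb Z_2}$ that factor through $q_C\otimes q_C:\mathcal A_{X,\mathbb Z_2}\otimes_{\min}\mathcal A_{X,\mathbb Z_2}\to\mathfrak C_X\otimes_{\min}\mathfrak C_X$. *)

theory Defs
  imports Complex_Main
begin

text \<open>Concrete model of the Clifford algebra C_X (X finite, linearly ordered so that
  ordered monomials u_S = product of u_x, x in S increasing, form a basis) and of
  C_X (x)_min C_X, which is finite dimensional, so the minimal tensor product is the
  algebraic one.  An element of C_X (x) C_X is given by its coefficient function on the
  basis u_S (x) u_T, S, T subsets of X.\<close>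

type_synonym 'x clt = "'x set \<times> 'x set \<Rightarrow> complex"

definition sdiff :: "'a set \<Rightarrow> 'a set \<Rightarrow> 'a set" where
  "sdiff A B = (A - B) \<union> (B - A)"

text \<open>u_S u_T = cl_sgn S T * u_(S symdiff T)\<close>
definition cl_sgn :: "'x::linorder set \<Rightarrow> 'x set \<Rightarrow> complex" where
  "cl_sgn S T = (-1) ^ card {(i, j). i \<in> S \<and> j \<in> T \<and> j < i}"

definition clt_mult :: "'x::linorder set \<Rightarrow> 'x clt \<Rightarrow> 'x clt \<Rightarrow> 'x clt" where
  "clt_mult X a b = (\<lambda>(S, T). \<Sum>(S1, T1) \<in> Pow X \<times> Pow X.
      a (S1, T1) * b (sdiff S1 S, sdiff T1 T) * cl_sgn S1 (sdiff S1 S) * cl_sgn T1 (sdiff T1 T))"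

text \<open>(u_S (x) u_T)^* = u_S^* (x) u_T^*, and u_S^* = u_S^(-1) = cl_sgn S S * u_S\<close>
definition clt_star :: "'x::linorder clt \<Rightarrow> 'x clt" where
  "clt_star a = (\<lambda>(S, T). cnj (a (S, T)) * cl_sgn S S * cl_sgn T T)"

definition lin_eval :: "'x set \<Rightarrow> 'x clt \<Rightarrow> 'x clt \<Rightarrow> complex" where
  "lin_eval X w a = (\<Sum>(S, T) \<in> Pow X \<times> Pow X. w (S, T) * a (S, T))"

definition cpos :: "complex \<Rightarrow> bool" where
  "cpos z \<longleftrightarrow> Im z = 0 \<and> 0 \<le> Re z"

text \<open>States of C_X (x)_min C_X (canonical representative: zero off Pow X x Pow X).\<close>
definition is_state_CC :: "'x::linorder set \<Rightarrow> 'x clt \<Rightarrow> bool" where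
  "is_state_CC X w \<longleftrightarrow>
     (\<forall>S T. \<not> (S \<subseteq> X \<and> T \<subseteq> X) \<longrightarrow> w (S, T) = 0) \<and>
     w ({}, {}) = 1 \<and>
     (\<forall>a. cpos (lin_eval X w (clt_mult X (clt_star a) a)))"

text \<open>Membership in the operator subsystem S_X (x) S_X = span of (1 or u_x) (x) (1 or u_y).\<close>
definition in_SS :: "'x set \<Rightarrow> 'x clt \<Rightarrow> bool" where
  "in_SS X c \<longleftrightarrow> (\<forall>S \<in> Pow X. \<forall>T \<in> Pow X. c (S, T) \<noteq> 0 \<longrightarrow> card S \<le> 1 \<and> card T \<le> 1)"

text \<open>States of the operator system S_X (x)_min S_X: unital functionals that are
  nonnegative on the positive elements, i.e. the elements a^* a of C_X (x) C_X lying in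
  the subsystem (min tensor product is injective).  Only the values of s on the basis
  elements (S,T) with card S, card T at most 1 matter.\<close>
definition is_state_SS :: "'x::linorder set \<Rightarrow> 'x clt \<Rightarrow> bool" where
  "is_state_SS X s \<longleftrightarrow>
     s ({}, {}) = 1 \<and>
     (\<forall>a. in_SS X (clt_mult X (clt_star a) a) \<longrightarrow>
          cpos (lin_eval X s (clt_mult X (clt_star a) a)))"

text \<open>q_C(e_(x,a)) = (1 + (-1)^a u_x)/2, with a :: bool (False = 0, True = 1 in Z_2).\<close>
definition qe :: "'x \<Rightarrow> bool \<Rightarrow> 'x set \<Rightarrow> complex" where
  "qe x a = (\<lambda>S. if S = {} then 1/2 else if S = {x} then (if a then - 1/2 else 1/2) else 0)"

definition tens :: "('x set \<Rightarrow> complex) \<Rightarrow> ('x set \<Rightarrow> complex) \<Rightarrow> 'x clt" where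
  "tens f g = (\<lambda>(S, T). f S * g T)"

text \<open>p_{s~}(a,b|x,y) = s~(e_(x,a) (x) f_(y,b)) = s(q_C(e_(x,a)) (x) q_C(e_(y,b)))\<close>
definition corr :: "'x set \<Rightarrow> 'x clt \<Rightarrow> bool \<Rightarrow> bool \<Rightarrow> 'x \<Rightarrow> 'x \<Rightarrow> complex" where
  "corr X s a b x y = lin_eval X s (tens (qe x a) (qe y b))"

end

theory Submission
  imports Defs
begin

text \<open>Synchronicity forces \<open>s (u\<^sub>x \<otimes> u\<^sub>x) = 1\<close> for every \<open>x\<close>. Put
  \<open>P\<^sub>y = 1 - u\<^sub>y \<otimes> u\<^sub>y\<close>; since \<open>P\<^sub>y\<^sup>2 = 2 P\<^sub>y\<close>, a positive functional that is \<open>1\<close> on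
  \<open>u\<^sub>y \<otimes> u\<^sub>y\<close> vanishes on \<open>P\<^sub>y\<^sup>2\<close>, hence (Cauchy--Schwarz) on \<open>P\<^sub>y c + c\<^sup>* P\<^sub>y\<close>.
  So \<open>u\<^sub>y \<otimes> u\<^sub>y\<close> can be absorbed from either side, and where it anticommutes with
  \<open>u\<^sub>A \<otimes> u\<^sub>B\<close> the two absorptions differ by a sign, forcing the value \<open>0\<close>. Because
  \<open>|X|\<close> is even, every \<open>u\<^sub>A \<otimes> u\<^sub>B\<close> with \<open>A \<noteq> B\<close> anticommutes with some
  \<open>u\<^sub>y \<otimes> u\<^sub>y\<close>. Hence the only candidate extension is \<open>u\<^sub>A \<otimes> u\<^sub>B \<mapsto> \<delta>\<^sub>A\<^sub>B\<close>;
  it is positive, as it maps \<open>a\<^sup>* a\<close> to a sum of squared moduli, and the same argument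
  inside the operator system shows that it agrees with \<open>s\<close>.\<close>

lemma sdiff_commute: "sdiff A B = sdiff B A"
  by (auto simp: sdiff_def)

lemma sdiff_sdiff_cancel [simp]: "sdiff A (sdiff A U) = U"
  by (auto simp: sdiff_def)

lemma sdiff_empty [simp]: "sdiff {} A = A" "sdiff A {} = A" "sdiff A A = {}"
  by (auto simp: sdiff_def)

lemma sdiff_subset: "A \<subseteq> X \<Longrightarrow> B \<subseteq> X \<Longrightarrow> sdiff A B \<subseteq> X"
  by (auto simp: sdiff_def)

lemma finite_sdiff: "finite A \<Longrightarrow> finite B \<Longrightarrow> finite (sdiff A B)"
  by (auto simp: sdiff_def)

lemma sdiff_eq_empty_iff: "sdiff A B = {} \<longleftrightarrow> A = B"
  by (auto simp: sdiff_def)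

lemma card_sdiff_add_twice_Int:
  assumes "finite A" "finite B"
  shows "card (sdiff A B) + 2 * card (A \<inter> B) = card A + card B"
proof -
  have "card (sdiff A B) = card (A - B) + card (B - A)"
    unfolding sdiff_def by (rule card_Un_disjoint) (use assms in auto)
  moreover have "card A = card (A \<inter> B) + card (A - B)" "card B = card (A \<inter> B) + card (B - A)"
    using assms card_Int_Diff[of A B] card_Int_Diff[of B A] by (simp_all add: Int_commute)
  ultimately show ?thesis
    by simp
qed

lemma exists_odd_card_Diff_singleton:
  assumes "finite X" "even (card X)" "R \<subseteq> X" "R \<noteq> {}"
  obtains y where "y \<in> X" "odd (card (R - {y}))"
proof (cases "odd (card R)")
  case True
  then have "R \<noteq> X"
    using assms(2) by auto
  then obtain y where "y \<in> X" "y \<notin> R"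
    using assms(3) by auto
  with True show ?thesis
    using that by simp
next
  case False
  obtain y where "y \<in> R"
    using assms(4) by auto
  moreover have "card R > 0"
    using assms finite_subset by (auto simp: card_gt_0_iff)
  ultimately have "y \<in> X" "odd (card (R - {y}))"
    using False assms(3) by (auto simp: card_Diff_singleton)
  then show ?thesis
    using that by blast
qed

definition inversions :: "'x::linorder set \<Rightarrow> 'x set \<Rightarrow> nat" where
  "inversions S T = card {(i, j). i \<in> S \<and> j \<in> T \<and> j < i}"

lemma cl_sgn_inversions: "cl_sgn S T = (-1) ^ inversions S T"
  by (simp add: cl_sgn_def inversions_def)

lemma finite_inversion_pairs:
  "finite S \<Longrightarrow> finite T \<Longrightarrow> finite {(i, j). i \<in> S \<and> j \<in> T \<and> j < i}"
  by (rule finite_subset[of _ "S \<times> T"]) auto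

lemma inversions_Un_left:
  assumes "finite A" "finite B" "finite C" "A \<inter> B = {}"
  shows "inversions (A \<union> B) C = inversions A C + inversions B C"
proof -
  have "{(i, j). i \<in> A \<union> B \<and> j \<in> C \<and> j < i} =
      {(i, j). i \<in> A \<and> j \<in> C \<and> j < i} \<union> {(i, j). i \<in> B \<and> j \<in> C \<and> j < i}"
    by auto
  then show ?thesis
    unfolding inversions_def using assms
    by (simp add: card_Un_disjoint finite_inversion_pairs disjoint_iff)
qed

lemma inversions_Un_right:
  assumes "finite A" "finite B" "finite C" "A \<inter> B = {}"
  shows "inversions C (A \<union> B) = inversions C A + inversions C B"
proof -
  have "{(i, j). i \<in> C \<and> j \<in> A \<union> B \<and> j < i} =
      {(i, j). i \<in> C \<and> j \<in> A \<and> j < i} \<union> {(i, j). i \<in> C \<and> j \<in> B \<and> j < i}"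
    by auto
  then show ?thesis
    unfolding inversions_def using assms
    by (simp add: card_Un_disjoint finite_inversion_pairs disjoint_iff)
qed

lemma inversions_split_left:
  assumes "finite A" "finite C"
  shows "inversions A C = inversions (A - B) C + inversions (A \<inter> B) C"
proof -
  have "inversions A C = inversions ((A - B) \<union> (A \<inter> B)) C"
    by (simp add: Un_Diff_Int)
  also have "\<dots> = inversions (A - B) C + inversions (A \<inter> B) C"
    using assms by (intro inversions_Un_left) auto
  finally show ?thesis .
qed

lemma inversions_split_right:
  assumes "finite A" "finite C"
  shows "inversions C A = inversions C (A - B) + inversions C (A \<inter> B)"
proof -
  have "inversions C A = inversions C ((A - B) \<union> (A \<inter> B))"
    by (simp add: Un_Diff_Int)
  also have "\<dots> = inversions C (A - B) + inversions C (A \<inter> B)"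
    using assms by (intro inversions_Un_right) auto
  finally show ?thesis .
qed

lemma inversions_sdiff_left:
  assumes "finite A" "finite B" "finite C"
  shows "inversions A C + inversions B C = inversions (sdiff A B) C + 2 * inversions (A \<inter> B) C"
proof -
  have "inversions (sdiff A B) C = inversions (A - B) C + inversions (B - A) C"
    unfolding sdiff_def using assms by (intro inversions_Un_left) auto
  then show ?thesis
    using inversions_split_left[of A C B] inversions_split_left[of B C A] assms by (simp add: Int_commute)
qed

lemma inversions_sdiff_right:
  assumes "finite A" "finite B" "finite C"
  shows "inversions C A + inversions C B = inversions C (sdiff A B) + 2 * inversions C (A \<inter> B)"
proof -
  have "inversions C (sdiff A B) = inversions C (A - B) + inversions C (B - A)"
    unfolding sdiff_def using assms by (intro inversions_Un_right) auto
  then show ?thesis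
    using inversions_split_right[of A C B] inversions_split_right[of B C A] assms by (simp add: Int_commute)
qed

lemma cl_sgn_sdiff_left:
  assumes "finite A" "finite B" "finite C"
  shows "cl_sgn (sdiff A B) C = cl_sgn A C * cl_sgn B C"
  unfolding cl_sgn_inversions power_add [symmetric] inversions_sdiff_left[OF assms]
  by (simp add: power_add power_mult)

lemma cl_sgn_sdiff_right:
  assumes "finite A" "finite B" "finite C"
  shows "cl_sgn C (sdiff A B) = cl_sgn C A * cl_sgn C B"
  unfolding cl_sgn_inversions power_add [symmetric] inversions_sdiff_right[OF assms]
  by (simp add: power_add power_mult)

lemma cl_sgn_square [simp]: "cl_sgn A B * cl_sgn A B = 1"
  unfolding cl_sgn_inversions by (simp flip: power_add)

lemma cl_sgn_nonzero [simp]: "cl_sgn A B \<noteq> 0"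
  by (simp add: cl_sgn_inversions)

lemma cnj_cl_sgn [simp]: "cnj (cl_sgn A B) = cl_sgn A B"
  by (simp add: cl_sgn_inversions)

lemma cl_sgn_empty [simp]: "cl_sgn {} A = 1" "cl_sgn A {} = 1"
  by (simp_all add: cl_sgn_def)

lemma cl_sgn_self_card_le1:
  assumes "finite A" "card A \<le> 1"
  shows "cl_sgn A A = 1"
proof -
  have "\<forall>x\<in>A. \<forall>y\<in>A. x = y"
    using assms card_le_Suc0_iff_eq by auto
  then have "{(i, j). i \<in> A \<and> j \<in> A \<and> j < i} = {}"
    by auto
  then show ?thesis
    unfolding cl_sgn_def by (metis card.empty power_0)
qed

lemma cl_sgn_singleton_swap:
  assumes "finite S"
  shows "cl_sgn {y} S * cl_sgn S {y} = (-1) ^ card (S - {y})"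
proof -
  have "card (S - {y}) = card ({j \<in> S. j < y} \<union> {i \<in> S. y < i})"
    by (rule arg_cong[where f = card]) auto
  also have "\<dots> = card {j \<in> S. j < y} + card {i \<in> S. y < i}"
    using assms by (intro card_Un_disjoint) auto
  finally have "card (S - {y}) = card {j \<in> S. j < y} + card {i \<in> S. y < i}" .
  moreover have "{(i, j). i \<in> {y} \<and> j \<in> S \<and> j < i} = Pair y ` {j \<in> S. j < y}"
    by auto
  moreover have "{(i, j). i \<in> S \<and> j \<in> {y} \<and> j < i} = (\<lambda>i. (i, y)) ` {i \<in> S. y < i}"
    by auto
  ultimately show ?thesis
    unfolding cl_sgn_def by (simp add: card_image inj_on_def power_add)
qed

lemma cl_sgn_anticommute:
  assumes "finite A" "finite B" "odd (card (sdiff A B - {y}))"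
  shows "cl_sgn {y} A * cl_sgn {y} B = - (cl_sgn A {y} * cl_sgn B {y})"
proof -
  have "sdiff A B - {y} = sdiff (A - {y}) (B - {y})"
    by (auto simp: sdiff_def)
  then have "odd (card (A - {y}) + card (B - {y}))"
    using assms card_sdiff_add_twice_Int[of "A - {y}" "B - {y}"]
    by (metis finite_Diff even_add even_mult_iff even_numeral)
  then have "(cl_sgn {y} A * cl_sgn A {y}) * (cl_sgn {y} B * cl_sgn B {y}) = -1"
    using assms by (simp add: cl_sgn_singleton_swap flip: power_add)
  moreover have "(cl_sgn A {y} * cl_sgn B {y}) * (cl_sgn A {y} * cl_sgn B {y}) = 1"
    by (simp add: mult_ac)
  ultimately show ?thesis
    by algebra
qed

definition clt_basis :: "'x set \<Rightarrow> 'x set \<Rightarrow> 'x clt" where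
  "clt_basis A B = (\<lambda>p. if p = (A, B) then 1 else 0)"

lemma clt_mult_lin_left:
  "clt_mult X (\<lambda>p. x * f p + y * g p) b = (\<lambda>p. x * clt_mult X f b p + y * clt_mult X g b p)"
  unfolding clt_mult_def
  by (auto simp: fun_eq_iff split_def sum.distrib sum_distrib_left algebra_simps)

lemma clt_mult_lin_right:
  "clt_mult X b (\<lambda>p. x * f p + y * g p) = (\<lambda>p. x * clt_mult X b f p + y * clt_mult X b g p)"
  unfolding clt_mult_def
  by (auto simp: fun_eq_iff split_def sum.distrib sum_distrib_left algebra_simps)

lemma clt_mult_diff_left:
  "clt_mult X (\<lambda>p. f p - g p) b = (\<lambda>p. clt_mult X f b p - clt_mult X g b p)"
  using clt_mult_lin_left[of X 1 f "-1" g b] by simp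

lemma clt_mult_diff_right:
  "clt_mult X b (\<lambda>p. f p - g p) = (\<lambda>p. clt_mult X b f p - clt_mult X b g p)"
  using clt_mult_lin_right[of X b 1 f "-1" g] by simp

lemma clt_mult_scale_left:
  "clt_mult X (\<lambda>p. x * f p) b = (\<lambda>p. x * clt_mult X f b p)"
  using clt_mult_lin_left[of X x f 0 f b] by simp

lemma clt_mult_scale_right:
  "clt_mult X b (\<lambda>p. x * f p) = (\<lambda>p. x * clt_mult X b f p)"
  using clt_mult_lin_right[of X b x f 0 f] by simp

lemma clt_star_lin:
  "clt_star (\<lambda>p. x * f p + y * g p) = (\<lambda>p. cnj x * clt_star f p + cnj y * clt_star g p)"
  unfolding clt_star_def by (auto simp: fun_eq_iff algebra_simps)

lemma clt_star_diff:
  "clt_star (\<lambda>p. f p - g p) = (\<lambda>p. clt_star f p - clt_star g p)"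
  using clt_star_lin[of 1 f "-1" g] by simp

lemma clt_star_scale:
  "clt_star (\<lambda>p. x * f p) = (\<lambda>p. cnj x * clt_star f p)"
  unfolding clt_star_def by (auto simp: fun_eq_iff algebra_simps)

lemma clt_star_basis: "clt_star (clt_basis A B) = (\<lambda>p. (cl_sgn A A * cl_sgn B B) * clt_basis A B p)"
  unfolding clt_star_def clt_basis_def by (auto simp: fun_eq_iff)

lemma lin_eval_lin:
  "lin_eval X w (\<lambda>p. x * f p + y * g p) = x * lin_eval X w f + y * lin_eval X w g"
  unfolding lin_eval_def
  by (auto simp: split_def sum.distrib sum_distrib_left algebra_simps)

lemma lin_eval_diff:
  "lin_eval X w (\<lambda>p. f p - g p) = lin_eval X w f - lin_eval X w g"
  using lin_eval_lin[of X w 1 f "-1" g] by simp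

lemma lin_eval_add:
  "lin_eval X w (\<lambda>p. f p + g p) = lin_eval X w f + lin_eval X w g"
  using lin_eval_lin[of X w 1 f 1 g] by simp

lemma lin_eval_scale:
  "lin_eval X w (\<lambda>p. x * f p) = x * lin_eval X w f"
  using lin_eval_lin[of X w x f 0 f] by simp

lemma lin_eval_basis:
  assumes "finite X" "A \<subseteq> X" "B \<subseteq> X"
  shows "lin_eval X w (clt_basis A B) = w (A, B)"
proof -
  have "lin_eval X w (clt_basis A B) = (\<Sum>p\<in>Pow X \<times> Pow X. if p = (A, B) then w p else 0)"
    unfolding lin_eval_def clt_basis_def by (intro sum.cong refl) (auto split: if_splits)
  also have "\<dots> = w (A, B)"
    using assms by (simp add: sum.delta')
  finally show ?thesis .
qed

lemma clt_mult_basis: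
  assumes "finite X" "A \<subseteq> X" "B \<subseteq> X"
  shows "clt_mult X (clt_basis A B) (clt_basis C D)
    = (\<lambda>p. (cl_sgn A C * cl_sgn B D) * clt_basis (sdiff A C) (sdiff B D) p)"
proof (rule ext, clarify)
  fix S T
  have "clt_mult X (clt_basis A B) (clt_basis C D) (S, T) = (\<Sum>p\<in>Pow X \<times> Pow X. if p = (A, B) then
      clt_basis C D (sdiff A S, sdiff B T) * cl_sgn A (sdiff A S) * cl_sgn B (sdiff B T) else 0)"
    unfolding clt_mult_def clt_basis_def prod.case by (intro sum.cong refl) (auto split: if_splits)
  also have "\<dots> = clt_basis C D (sdiff A S, sdiff B T) * cl_sgn A (sdiff A S) * cl_sgn B (sdiff B T)"
    using assms by (simp add: sum.delta')
  also have "\<dots> = (cl_sgn A C * cl_sgn B D) * clt_basis (sdiff A C) (sdiff B D) (S, T)"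
    by (auto simp: clt_basis_def)
  finally show "clt_mult X (clt_basis A B) (clt_basis C D) (S, T)
      = (cl_sgn A C * cl_sgn B D) * clt_basis (sdiff A C) (sdiff B D) (S, T)" .
qed

lemma clt_star_mult_real_comb:
  fixes \<alpha> \<beta> :: real and P c :: "'x::linorder clt"
  assumes "clt_star P = P"
  shows "clt_mult X (clt_star (\<lambda>p. \<alpha> * P p + \<beta> * c p)) (\<lambda>p. \<alpha> * P p + \<beta> * c p)
    = (\<lambda>p. (\<alpha> * \<alpha>) * clt_mult X P P p + (\<alpha> * \<beta>) * (clt_mult X P c p + clt_mult X (clt_star c) P p)
         + (\<beta> * \<beta>) * clt_mult X (clt_star c) c p)"
  unfolding clt_star_lin assms clt_mult_lin_left clt_mult_lin_right
  by (auto simp: fun_eq_iff algebra_simps)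

lemma cpos_affine_imp_zero:
  fixes K L :: complex
  assumes "\<And>\<alpha>::real. cpos (\<alpha> * K + L)"
  shows "K = 0"
proof -
  have im: "\<alpha> * Im K + Im L = 0" and re: "\<alpha> * Re K + Re L \<ge> 0" for \<alpha>
    using assms[of \<alpha>] by (simp_all add: cpos_def)
  have "Im K = 0"
    using im[of 0] im[of 1] by simp
  moreover have "Re K = 0"
  proof (rule ccontr)
    assume "Re K \<noteq> 0"
    then have "(- (Re L + 1) / Re K) * Re K + Re L = -1"
      by (simp add: field_simps)
    with re[of "- (Re L + 1) / Re K"] show False
      by simp
  qed
  ultimately show ?thesis
    by (simp add: complex_eq_iff)
qed

text \<open>Cauchy--Schwarz: as \<open>w (P\<^sup>2) = 0\<close>, the nonnegative quadratic form
  \<open>(\<alpha>, \<beta>) \<mapsto> w ((\<alpha> P + \<beta> c)\<^sup>* (\<alpha> P + \<beta> c))\<close> has no \<open>\<alpha>\<^sup>2\<close> term, so its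
  \<open>\<alpha> \<beta>\<close> coefficient vanishes.\<close>
lemma positive_cross_terms_vanish:
  fixes P c :: "'x::linorder clt"
  assumes pos: "\<And>(\<alpha>::real) (\<beta>::real). cpos (lin_eval X w
      (clt_mult X (clt_star (\<lambda>p. \<alpha> * P p + \<beta> * c p)) (\<lambda>p. \<alpha> * P p + \<beta> * c p)))"
    and self_adjoint: "clt_star P = P"
    and vanish: "lin_eval X w (clt_mult X P P) = 0"
  shows "lin_eval X w (clt_mult X P c) + lin_eval X w (clt_mult X (clt_star c) P) = 0"
proof (rule cpos_affine_imp_zero)
  fix \<alpha> :: real
  show "cpos (\<alpha> * (lin_eval X w (clt_mult X P c) + lin_eval X w (clt_mult X (clt_star c) P))
      + lin_eval X w (clt_mult X (clt_star c) c))"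
    using pos[of \<alpha> 1]
    unfolding clt_star_mult_real_comb[OF self_adjoint] lin_eval_add lin_eval_scale vanish
    by simp
qed

definition one_minus_uu :: "'x \<Rightarrow> 'x clt" where
  "one_minus_uu y = (\<lambda>p. clt_basis {} {} p - clt_basis {y} {y} p)"

lemma clt_star_one_minus_uu: "clt_star (one_minus_uu y) = one_minus_uu y"
  unfolding one_minus_uu_def clt_star_diff clt_star_basis by simp

lemma one_minus_uu_square:
  assumes "finite X" "y \<in> X"
  shows "clt_mult X (one_minus_uu y) (one_minus_uu y) = (\<lambda>p. 2 * one_minus_uu y p)"
  unfolding one_minus_uu_def clt_mult_diff_left clt_mult_diff_right
  using assms by (simp add: clt_mult_basis fun_eq_iff)

lemma lin_eval_one_minus_uu:
  assumes "finite X" "y \<in> X"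
  shows "lin_eval X w (one_minus_uu y) = w ({}, {}) - w ({y}, {y})"
  unfolding one_minus_uu_def lin_eval_diff using assms by (simp add: lin_eval_basis)

lemma lin_eval_one_minus_uu_square:
  assumes "finite X" "y \<in> X" "w ({}, {}) = 1" "w ({y}, {y}) = 1"
  shows "lin_eval X w (clt_mult X (one_minus_uu y) (one_minus_uu y)) = 0"
  using assms by (simp add: one_minus_uu_square lin_eval_scale lin_eval_one_minus_uu)

lemma one_minus_uu_mult_basis:
  assumes "finite X" "y \<in> X" "A \<subseteq> X" "B \<subseteq> X"
  shows "clt_mult X (one_minus_uu y) (clt_basis A B)
    = (\<lambda>p. clt_basis A B p - (cl_sgn {y} A * cl_sgn {y} B) * clt_basis (sdiff {y} A) (sdiff {y} B) p)"
  unfolding one_minus_uu_def clt_mult_diff_left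
  using assms by (simp add: clt_mult_basis)

lemma basis_mult_one_minus_uu:
  assumes "finite X" "y \<in> X" "A \<subseteq> X" "B \<subseteq> X"
  shows "clt_mult X (clt_basis A B) (one_minus_uu y)
    = (\<lambda>p. clt_basis A B p - (cl_sgn A {y} * cl_sgn B {y}) * clt_basis (sdiff {y} A) (sdiff {y} B) p)"
  unfolding one_minus_uu_def clt_mult_diff_right
  using assms by (simp add: clt_mult_basis sdiff_commute)

lemma lin_eval_one_minus_uu_mult_basis:
  assumes fin: "finite X" and y: "y \<in> X" and AB: "A \<subseteq> X" "B \<subseteq> X"
  shows "lin_eval X w (clt_mult X (one_minus_uu y) (clt_basis A B))
      = w (A, B) - (cl_sgn {y} A * cl_sgn {y} B) * w (sdiff {y} A, sdiff {y} B)"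
    and "lin_eval X w (clt_mult X (clt_basis A B) (one_minus_uu y))
      = w (A, B) - (cl_sgn A {y} * cl_sgn B {y}) * w (sdiff {y} A, sdiff {y} B)"
proof -
  have "sdiff {y} A \<subseteq> X" "sdiff {y} B \<subseteq> X"
    using y AB sdiff_subset[of "{y}" X] by auto
  then show "lin_eval X w (clt_mult X (one_minus_uu y) (clt_basis A B))
      = w (A, B) - (cl_sgn {y} A * cl_sgn {y} B) * w (sdiff {y} A, sdiff {y} B)"
    and "lin_eval X w (clt_mult X (clt_basis A B) (one_minus_uu y))
      = w (A, B) - (cl_sgn A {y} * cl_sgn B {y}) * w (sdiff {y} A, sdiff {y} B)"
    unfolding one_minus_uu_mult_basis[OF fin y AB] basis_mult_one_minus_uu[OF fin y AB]
      lin_eval_diff lin_eval_scale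
    using fin AB by (simp_all add: lin_eval_basis)
qed

lemma clt_star_basis_card_le1:
  assumes "finite A" "finite B" "card A \<le> 1" "card B \<le> 1"
  shows "clt_star (clt_basis A B) = clt_basis A B"
  unfolding clt_star_basis using assms by (simp add: cl_sgn_self_card_le1)

lemma clt_basis_square_card_le1:
  assumes "finite X" "A \<subseteq> X" "B \<subseteq> X" "card A \<le> 1" "card B \<le> 1"
  shows "clt_mult X (clt_basis A B) (clt_basis A B) = clt_basis {} {}"
  using assms finite_subset[of A X] finite_subset[of B X]
  by (simp add: clt_mult_basis cl_sgn_self_card_le1)

lemma one_minus_uu_anticommutator:
  assumes fin: "finite X" and y: "y \<in> X" and AB: "A \<subseteq> X" "B \<subseteq> X"
    and odd: "odd (card (sdiff A B - {y}))"
  shows "clt_mult X (one_minus_uu y) (clt_basis A B) p + clt_mult X (clt_basis A B) (one_minus_uu y) p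
    = 2 * clt_basis A B p"
proof -
  have "finite A" "finite B"
    using AB fin finite_subset by auto
  then show ?thesis
    unfolding one_minus_uu_mult_basis[OF fin y AB] basis_mult_one_minus_uu[OF fin y AB]
    using cl_sgn_anticommute[OF _ _ odd] by (simp add: algebra_simps)
qed

lemma in_SS_star_mult_real_comb:
  fixes \<alpha> \<beta> :: real
  assumes fin: "finite X" and y: "y \<in> X"
    and AB: "A \<subseteq> X" "B \<subseteq> X" "card A \<le> 1" "card B \<le> 1"
    and odd: "odd (card (sdiff A B - {y}))"
  defines "a \<equiv> \<lambda>p. of_real \<alpha> * one_minus_uu y p + of_real \<beta> * clt_basis A B p"
  shows "in_SS X (clt_mult X (clt_star a) a)"
proof -
  have "clt_mult X (clt_star a) a = (\<lambda>p. (\<alpha> * \<alpha>) * (2 * one_minus_uu y p)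
      + (\<alpha> * \<beta>) * (2 * clt_basis A B p) + (\<beta> * \<beta>) * clt_basis {} {} p)"
    unfolding a_def clt_star_mult_real_comb[OF clt_star_one_minus_uu] one_minus_uu_square[OF fin y]
      clt_star_basis_card_le1[OF finite_subset[OF AB(1) fin] finite_subset[OF AB(2) fin] AB(3,4)]
      clt_basis_square_card_le1[OF fin AB] one_minus_uu_anticommutator[OF fin y AB(1,2) odd]
    by simp
  then show ?thesis
    unfolding in_SS_def one_minus_uu_def clt_basis_def using AB by auto
qed

lemma SS_state_vanishes_anticommuting:
  assumes fin: "finite X" and st: "is_state_SS X s" and y: "y \<in> X" and syy: "s ({y}, {y}) = 1"
    and AB: "A \<subseteq> X" "B \<subseteq> X" "card A \<le> 1" "card B \<le> 1"
    and odd: "odd (card (sdiff A B - {y}))"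
  shows "s (A, B) = 0"
proof -
  have "cpos (lin_eval X s (clt_mult X (clt_star (\<lambda>p. \<alpha> * one_minus_uu y p + \<beta> * clt_basis A B p))
      (\<lambda>p. \<alpha> * one_minus_uu y p + \<beta> * clt_basis A B p)))" for \<alpha> \<beta> :: real
    using st in_SS_star_mult_real_comb[OF fin y AB odd] unfolding is_state_SS_def by blast
  moreover have "lin_eval X s (clt_mult X (one_minus_uu y) (one_minus_uu y)) = 0"
    using st syy by (intro lin_eval_one_minus_uu_square[OF fin y]) (simp_all add: is_state_SS_def)
  ultimately have "lin_eval X s (clt_mult X (one_minus_uu y) (clt_basis A B))
      + lin_eval X s (clt_mult X (clt_star (clt_basis A B)) (one_minus_uu y)) = 0"
    by (rule positive_cross_terms_vanish[OF _ clt_star_one_minus_uu])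
  then have "lin_eval X s (\<lambda>p. 2 * clt_basis A B p) = 0"
    unfolding clt_star_basis_card_le1[OF finite_subset[OF AB(1) fin] finite_subset[OF AB(2) fin] AB(3,4)]
      lin_eval_add[symmetric] one_minus_uu_anticommutator[OF fin y AB(1,2) odd] .
  then show ?thesis
    unfolding lin_eval_scale using lin_eval_basis[OF fin AB(1,2)] by simp
qed

lemma CC_state_shift:
  assumes fin: "finite X" and st: "is_state_CC X t" and y: "y \<in> X" and tyy: "t ({y}, {y}) = 1"
    and AB: "A \<subseteq> X" "B \<subseteq> X"
  shows "t (A, B) = (cl_sgn {y} A * cl_sgn {y} B) * t (sdiff {y} A, sdiff {y} B)"
    and "t (A, B) = (cl_sgn A {y} * cl_sgn B {y}) * t (sdiff {y} A, sdiff {y} B)"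
proof -
  have pos: "cpos (lin_eval X t (clt_mult X (clt_star a) a))" for a
    using st by (simp add: is_state_CC_def)
  have vanish: "lin_eval X t (clt_mult X (one_minus_uu y) (one_minus_uu y)) = 0"
    using st tyy by (intro lin_eval_one_minus_uu_square[OF fin y]) (simp_all add: is_state_CC_def)
  define \<kappa> where "\<kappa> = cl_sgn A A * cl_sgn B B"
  define s1 where "s1 = cl_sgn {y} A * cl_sgn {y} B"
  define s2 where "s2 = cl_sgn A {y} * cl_sgn B {y}"
  define t' where "t' = t (sdiff {y} A, sdiff {y} B)"
  note left_right = lin_eval_one_minus_uu_mult_basis[OF fin y AB, of t, folded s1_def s2_def t'_def]
  have "lin_eval X t (clt_mult X (one_minus_uu y) (clt_basis A B))
      + lin_eval X t (clt_mult X (clt_star (clt_basis A B)) (one_minus_uu y)) = 0"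
    by (rule positive_cross_terms_vanish[OF pos clt_star_one_minus_uu vanish])
  then have real_part: "(t (A, B) - s1 * t') + \<kappa> * (t (A, B) - s2 * t') = 0"
    unfolding clt_star_basis clt_mult_scale_left lin_eval_scale left_right \<kappa>_def .
  have "lin_eval X t (clt_mult X (one_minus_uu y) (\<lambda>p. \<i> * clt_basis A B p))
      + lin_eval X t (clt_mult X (clt_star (\<lambda>p. \<i> * clt_basis A B p)) (one_minus_uu y)) = 0"
    by (rule positive_cross_terms_vanish[OF pos clt_star_one_minus_uu vanish])
  then have imag_part: "\<i> * (t (A, B) - s1 * t') - \<i> * \<kappa> * (t (A, B) - s2 * t') = 0"
    unfolding clt_star_scale clt_star_basis clt_mult_scale_left clt_mult_scale_right lin_eval_scale
      left_right \<kappa>_def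
    by (simp add: algebra_simps)
  have "t (A, B) - s1 * t' = 0" "\<kappa> * (t (A, B) - s2 * t') = 0"
    using real_part imag_part by (simp_all add: algebra_simps complex_eq_iff)
  moreover have "\<kappa> \<noteq> 0"
    by (simp add: \<kappa>_def)
  ultimately show "t (A, B) = s1 * t'" "t (A, B) = s2 * t'"
    by simp_all
qed

lemma CC_state_vanishes_anticommuting:
  assumes fin: "finite X" and st: "is_state_CC X t" and y: "y \<in> X" and tyy: "t ({y}, {y}) = 1"
    and AB: "A \<subseteq> X" "B \<subseteq> X" and odd: "odd (card (sdiff A B - {y}))"
  shows "t (A, B) = 0"
proof -
  have "finite A" "finite B"
    using AB fin finite_subset by auto
  then have "cl_sgn {y} A * cl_sgn {y} B = - (cl_sgn A {y} * cl_sgn B {y})"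
    using cl_sgn_anticommute odd by blast
  then show ?thesis
    using CC_state_shift[OF fin st y tyy AB] by simp
qed

lemma CC_state_diagonal:
  assumes fin: "finite X" and st: "is_state_CC X t" and one: "\<forall>y\<in>X. t ({y}, {y}) = 1"
    and A: "A \<subseteq> X"
  shows "t (A, A) = 1"
  using finite_subset[OF A fin] A
proof (induction A rule: finite_subset_induct')
  case empty
  then show ?case
    using st by (simp add: is_state_CC_def)
next
  case (insert y F)
  have "sdiff {y} (insert y F) = F"
    using insert by (auto simp: sdiff_def)
  moreover have "insert y F \<subseteq> X"
    using insert by auto
  ultimately show ?case
    using CC_state_shift(1)[OF fin st \<open>y \<in> X\<close> _ \<open>insert y F \<subseteq> X\<close> \<open>insert y F \<subseteq> X\<close>] one insert
    by simp
qed

definition diag_state :: "'x set \<Rightarrow> 'x clt" where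
  "diag_state X = (\<lambda>(S, T). if S = T \<and> S \<subseteq> X then 1 else 0)"

lemma lin_eval_diag_state:
  assumes "finite X"
  shows "lin_eval X (diag_state X) m = (\<Sum>S\<in>Pow X. m (S, S))"
proof -
  have "lin_eval X (diag_state X) m = (\<Sum>S\<in>Pow X. \<Sum>T\<in>Pow X. if S = T then m (S, T) else 0)"
    unfolding lin_eval_def sum.cartesian_product [symmetric]
    by (intro sum.cong refl) (auto simp: diag_state_def)
  also have "\<dots> = (\<Sum>S\<in>Pow X. m (S, S))"
    using assms by simp
  finally show ?thesis .
qed

lemma sum_Pow_sdiff_reindex:
  assumes "finite X" "A \<subseteq> X"
  shows "(\<Sum>U\<in>Pow X. f (sdiff A U)) = (\<Sum>U\<in>Pow X. f U)"
  by (rule sum.reindex_bij_witness[of _ "sdiff A" "sdiff A"]) (use assms in \<open>auto simp: sdiff_def\<close>)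

lemma star_mult_diag_summand:
  assumes "finite S1" "finite D" "finite U"
  shows "cnj (a (S1, sdiff S1 D)) * cl_sgn S1 S1 * cl_sgn (sdiff S1 D) (sdiff S1 D) * a (U, sdiff D U)
      * cl_sgn S1 U * cl_sgn (sdiff S1 D) (sdiff D U)
    = cnj (a (S1, sdiff S1 D) * cl_sgn D S1) * (a (U, sdiff U D) * cl_sgn D U)"
proof -
  have "cl_sgn (sdiff S1 D) (sdiff S1 D) = cl_sgn S1 S1 * cl_sgn S1 D * cl_sgn D S1 * cl_sgn D D"
    and "cl_sgn (sdiff S1 D) (sdiff D U) = cl_sgn S1 D * cl_sgn S1 U * cl_sgn D D * cl_sgn D U"
    using assms by (simp_all add: cl_sgn_sdiff_left cl_sgn_sdiff_right finite_sdiff)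
  then show ?thesis
    by (simp add: sdiff_commute[of U D] mult_ac)
qed

text \<open>Reindexing by the offset \<open>D = S\<^sub>1 \<triangle> T\<^sub>1\<close> and by \<open>U = S\<^sub>1 \<triangle> S\<close> turns the
  diagonal of \<open>a\<^sup>* a\<close> into a sum of squared moduli.\<close>
lemma lin_eval_diag_state_star_mult:
  assumes fin: "finite X"
  shows "lin_eval X (diag_state X) (clt_mult X (clt_star a) a)
    = of_real (\<Sum>D\<in>Pow X. (cmod (\<Sum>V\<in>Pow X. a (V, sdiff V D) * cl_sgn D V))\<^sup>2)"
proof -
  define F where "F S S1 T1 = cnj (a (S1, T1)) * cl_sgn S1 S1 * cl_sgn T1 T1 * a (sdiff S1 S, sdiff T1 S)
      * cl_sgn S1 (sdiff S1 S) * cl_sgn T1 (sdiff T1 S)" for S S1 T1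
  define h where "h D V = a (V, sdiff V D) * cl_sgn D V" for D V
  have "lin_eval X (diag_state X) (clt_mult X (clt_star a) a)
      = (\<Sum>S\<in>Pow X. \<Sum>S1\<in>Pow X. \<Sum>T1\<in>Pow X. F S S1 T1)"
    unfolding lin_eval_diag_state[OF fin] clt_mult_def clt_star_def F_def
    by (simp add: sum.cartesian_product split_def)
  also have "\<dots> = (\<Sum>S1\<in>Pow X. \<Sum>T1\<in>Pow X. \<Sum>S\<in>Pow X. F S S1 T1)"
    by (subst sum.swap, rule sum.cong[OF refl], rule sum.swap)
  also have "\<dots> = (\<Sum>S1\<in>Pow X. \<Sum>D\<in>Pow X. \<Sum>U\<in>Pow X. F (sdiff S1 U) S1 (sdiff S1 D))"
  proof (rule sum.cong[OF refl])
    fix S1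
    assume "S1 \<in> Pow X"
    then show "(\<Sum>T1\<in>Pow X. \<Sum>S\<in>Pow X. F S S1 T1)
        = (\<Sum>D\<in>Pow X. \<Sum>U\<in>Pow X. F (sdiff S1 U) S1 (sdiff S1 D))"
      using fin sum_Pow_sdiff_reindex[of X S1 "\<lambda>T1. \<Sum>S\<in>Pow X. F S S1 T1"]
      by (simp add: sum_Pow_sdiff_reindex[of X S1 "\<lambda>S. F S S1 _"])
  qed
  also have "\<dots> = (\<Sum>S1\<in>Pow X. \<Sum>D\<in>Pow X. \<Sum>U\<in>Pow X. cnj (h D S1) * h D U)"
  proof (intro sum.cong refl)
    fix S1 D U
    assume "S1 \<in> Pow X" "D \<in> Pow X" "U \<in> Pow X"
    then have "finite S1" "finite D" "finite U"
      using fin finite_subset by auto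
    moreover have "sdiff (sdiff S1 D) (sdiff S1 U) = sdiff D U"
      by (auto simp: sdiff_def)
    ultimately show "F (sdiff S1 U) S1 (sdiff S1 D) = cnj (h D S1) * h D U"
      unfolding F_def h_def sdiff_sdiff_cancel by (simp only: star_mult_diag_summand)
  qed
  also have "\<dots> = (\<Sum>D\<in>Pow X. cnj (\<Sum>V\<in>Pow X. h D V) * (\<Sum>V\<in>Pow X. h D V))"
    by (subst sum.swap) (simp add: sum_product cnj_sum)
  also have "\<dots> = of_real (\<Sum>D\<in>Pow X. (cmod (\<Sum>V\<in>Pow X. h D V))\<^sup>2)"
    unfolding of_real_sum complex_norm_square by (simp add: mult.commute)
  finally show ?thesis
    unfolding h_def .
qed

lemma is_state_CC_diag_state:
  assumes "finite X"
  shows "is_state_CC X (diag_state X)"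
  unfolding is_state_CC_def lin_eval_diag_state_star_mult[OF assms]
  by (auto simp: diag_state_def cpos_def sum_nonneg)

lemma CC_state_eq_diag_state:
  assumes fin: "finite X" and even: "even (card X)" and st: "is_state_CC X t"
    and one: "\<forall>y\<in>X. t ({y}, {y}) = 1"
  shows "t = diag_state X"
proof (rule ext, clarify)
  fix S T
  show "t (S, T) = diag_state X (S, T)"
  proof (cases "S \<subseteq> X \<and> T \<subseteq> X")
    case False
    moreover have "\<forall>S T. \<not> (S \<subseteq> X \<and> T \<subseteq> X) \<longrightarrow> t (S, T) = 0"
      using st by (simp add: is_state_CC_def)
    ultimately show ?thesis
      by (auto simp: diag_state_def)
  next
    case ST: True
    show ?thesis
    proof (cases "S = T")
      case True
      then show ?thesis
        using ST CC_state_diagonal[OF fin st one] by (simp add: diag_state_def)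
    next
      case False
      have "sdiff S T \<subseteq> X" "sdiff S T \<noteq> {}"
        using ST False by (simp_all add: sdiff_subset sdiff_eq_empty_iff)
      then obtain y where "y \<in> X" "odd (card (sdiff S T - {y}))"
        using exists_odd_card_Diff_singleton[OF fin even] by blast
      then have "t (S, T) = 0"
        using ST one by (intro CC_state_vanishes_anticommuting[OF fin st]) simp_all
      then show ?thesis
        using False by (simp add: diag_state_def)
    qed
  qed
qed

lemma corr_diagonal:
  assumes "finite X" "x \<in> X"
  shows "corr X s a b x x = (1/4) * s ({}, {}) + ((if a then -1 else 1)/4) * s ({x}, {})
     + ((if b then -1 else 1)/4) * s ({}, {x})
     + ((if a then -1 else 1) * (if b then -1 else 1)/4) * s ({x}, {x})"
proof -
  have tens: "tens (qe x a) (qe x b) = (\<lambda>p. (1/4) * clt_basis {} {} p + ((if a then -1 else 1)/4) * clt_basis {x} {} p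
     + ((if b then -1 else 1)/4) * clt_basis {} {x} p
     + ((if a then -1 else 1) * (if b then -1 else 1)/4) * clt_basis {x} {x} p)"
    by (auto simp: fun_eq_iff tens_def qe_def clt_basis_def)
  show ?thesis
    unfolding corr_def tens lin_eval_add lin_eval_scale using assms by (simp add: lin_eval_basis)
qed

lemma synchronous_singleton_diag_eq:
  assumes "finite X" "x \<in> X" "\<forall>x \<in> X. \<forall>a b. a \<noteq> b \<longrightarrow> corr X s a b x x = 0"
  shows "s ({x}, {x}) = s ({}, {})"
proof -
  have "corr X s False True x x = 0" "corr X s True False x x = 0"
    using assms(2,3) by blast+
  then show ?thesis
    unfolding corr_diagonal[OF assms(1,2)] by (simp add: complex_eq_iff)
qed

lemma SS_state_eq_diag_state_low_degree:
  assumes fin: "finite X" and even: "even (card X)" and st: "is_state_SS X s"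
    and sync: "\<forall>x \<in> X. \<forall>a b. a \<noteq> b \<longrightarrow> corr X s a b x x = 0"
    and ST: "S \<subseteq> X" "T \<subseteq> X" "card S \<le> 1" "card T \<le> 1"
  shows "s (S, T) = diag_state X (S, T)"
proof -
  have one: "s ({}, {}) = 1"
    using st by (simp add: is_state_SS_def)
  then have uu_one: "\<forall>y\<in>X. s ({y}, {y}) = 1"
    using synchronous_singleton_diag_eq[OF fin _ sync] by simp
  show ?thesis
  proof (cases "S = T")
    case True
    have "finite S"
      using ST fin finite_subset by auto
    then consider "S = {}" | x where "S = {x}"
      using ST(3) by (metis card_0_eq card_1_singletonE le_neq_implies_less less_one)
    then show ?thesis
    proof cases
      case 1
      then show ?thesis
        using True one by (simp add: diag_state_def)
    next
      case 2
      then show ?thesis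
        using True ST uu_one by (auto simp: diag_state_def)
    qed
  next
    case False
    have "sdiff S T \<subseteq> X" "sdiff S T \<noteq> {}"
      using ST False by (simp_all add: sdiff_subset sdiff_eq_empty_iff)
    then obtain y where "y \<in> X" "odd (card (sdiff S T - {y}))"
      using exists_odd_card_Diff_singleton[OF fin even] by blast
    then have "s (S, T) = 0"
      using ST uu_one by (intro SS_state_vanishes_anticommuting[OF fin st]) simp_all
    then show ?thesis
      using False by (simp add: diag_state_def)
  qed
qed

theorem mainTheorem17:
  fixes X :: "'x::linorder set" and s :: "'x clt"
  assumes "finite X" and "even (card X)"
    and "is_state_SS X s"
    and "\<forall>x \<in> X. \<forall>a b. a \<noteq> b \<longrightarrow> corr X s a b x x = 0"
  shows "\<exists>!t. is_state_CC X t \<and>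
           (\<forall>S T. S \<subseteq> X \<longrightarrow> T \<subseteq> X \<longrightarrow> card S \<le> 1 \<longrightarrow> card T \<le> 1 \<longrightarrow> t (S, T) = s (S, T))"
proof (rule ex1I[of _ "diag_state X"])
  show "is_state_CC X (diag_state X) \<and>
      (\<forall>S T. S \<subseteq> X \<longrightarrow> T \<subseteq> X \<longrightarrow> card S \<le> 1 \<longrightarrow> card T \<le> 1 \<longrightarrow> diag_state X (S, T) = s (S, T))"
    using is_state_CC_diag_state[OF assms(1)] SS_state_eq_diag_state_low_degree[OF assms] by simp
next
  fix t
  assume t: "is_state_CC X t \<and>
      (\<forall>S T. S \<subseteq> X \<longrightarrow> T \<subseteq> X \<longrightarrow> card S \<le> 1 \<longrightarrow> card T \<le> 1 \<longrightarrow> t (S, T) = s (S, T))"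
  have "\<forall>y\<in>X. t ({y}, {y}) = 1"
  proof
    fix y
    assume "y \<in> X"
    then have "t ({y}, {y}) = s ({y}, {y})" and "s ({y}, {y}) = diag_state X ({y}, {y})"
      using t SS_state_eq_diag_state_low_degree[OF assms, of "{y}" "{y}"] by simp_all
    then show "t ({y}, {y}) = 1"
      using \<open>y \<in> X\<close> by (simp add: diag_state_def)
  qed
  with t show "t = diag_state X"
    using CC_state_eq_diag_state[OF assms(1,2)] by simp
qed

end
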